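(* Let $f,g,h$ be smooth real functions of one variable with $f\neq 0$, $g\neq 0$, $g'\neq 0$. Then the equation $$u_t-f(u)u_x-g(u)u_{xx}+h(u)u_x^2=0$$ is strictly self-adjoint if and only if $$h(u)=-\frac{g(u)}{u}-g'(u).$$
   Context: For a differential equation $\mathfrak{F}[u]=0$ in independent variables $t,x$ and dependent variable $u$, introduce a new dependent variable $\nu=\nu(t,x)$. The formal Lagrangian is $\mathfrak{L}=\nu\mathfrak{F}$ and the adjoint is $\mathfrak{F}^*=\frac{\delta\mathfrak{L}}{\delta u}$, where $\frac{\delta}{\delta u}=\frac{\partial}{\partial u}-D_t\frac{\partial}{\partial u_t}-D_x\frac{\partial}{\partial u_x}+D_x^2\frac{\partial}{\partial u_{xx}}$ and $D_t,D_x$ are total derivatives. The equation is strictly self-adjoint if $\mathfrak{F}^*|_{\nu=u}=\lambda\mathfrak{F}$ for some coefficient $\lambda=\lambda(t,x,u,\dots)$ (with derivatives of $\nu$ replaced by the corresponding derivatives of $u$). *)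

theory Defs
  imports "HOL-Analysis.Analysis"
begin

definition smooth_fun :: "(real \<Rightarrow> real) \<Rightarrow> bool" where
  "smooth_fun f \<longleftrightarrow> (\<forall>n. \<forall>y. ((deriv ^^ n) f) differentiable (at y))"

definition pt :: "(real \<Rightarrow> real \<Rightarrow> real) \<Rightarrow> real \<Rightarrow> real \<Rightarrow> real" where
  "pt U t x = deriv (\<lambda>s. U s x) t"

definition px :: "(real \<Rightarrow> real \<Rightarrow> real) \<Rightarrow> real \<Rightarrow> real \<Rightarrow> real" where
  "px U t x = deriv (\<lambda>y. U t y) x"

definition mixpd :: "nat \<Rightarrow> nat \<Rightarrow> (real \<Rightarrow> real \<Rightarrow> real) \<Rightarrow> real \<Rightarrow> real \<Rightarrow> real" where
  "mixpd i j U t x = (deriv ^^ i) (\<lambda>s. (deriv ^^ j) (\<lambda>y. U s y) x) t"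

definition smooth2 :: "(real \<Rightarrow> real \<Rightarrow> real) \<Rightarrow> bool" where
  "smooth2 U \<longleftrightarrow> (\<forall>i j.
      continuous_on UNIV (\<lambda>p. mixpd i j U (fst p) (snd p)) \<and>
      (\<forall>t x. (\<lambda>s. mixpd i j U s x) differentiable (at t)) \<and>
      (\<forall>t x. (\<lambda>y. mixpd i j U t y) differentiable (at x)) \<and>
      (\<forall>t x. (\<lambda>y. (deriv ^^ j) (\<lambda>y. U t y) y) differentiable (at x)))"

definition jet :: "(real \<Rightarrow> real \<Rightarrow> real) \<Rightarrow> real \<Rightarrow> real \<Rightarrow> nat \<Rightarrow> nat \<Rightarrow> real" where
  "jet U t x = (\<lambda>i j. mixpd i j U t x)"

text \<open>A second-order differential function F(t,x,u,u_t,u_x,u_xx) and Lagrangians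
L(t,x,u,u_t,u_x,u_xx,nu) (depending also on the new dependent variable nu).\<close>
type_synonym dfun = "real \<Rightarrow> real \<Rightarrow> real \<Rightarrow> real \<Rightarrow> real \<Rightarrow> real \<Rightarrow> real"
type_synonym lagr = "real \<Rightarrow> real \<Rightarrow> real \<Rightarrow> real \<Rightarrow> real \<Rightarrow> real \<Rightarrow> real \<Rightarrow> real"

definition formal_lagrangian :: "dfun \<Rightarrow> lagr" where
  "formal_lagrangian F = (\<lambda>t x u ut ux uxx nu. nu * F t x u ut ux uxx)"

definition L_u :: "lagr \<Rightarrow> (real \<Rightarrow> real \<Rightarrow> real) \<Rightarrow> (real \<Rightarrow> real \<Rightarrow> real) \<Rightarrow> real \<Rightarrow> real \<Rightarrow> real" where
  "L_u L U N t x = deriv (\<lambda>v. L t x v (pt U t x) (px U t x) (px (px U) t x) (N t x)) (U t x)"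

definition L_ut :: "lagr \<Rightarrow> (real \<Rightarrow> real \<Rightarrow> real) \<Rightarrow> (real \<Rightarrow> real \<Rightarrow> real) \<Rightarrow> real \<Rightarrow> real \<Rightarrow> real" where
  "L_ut L U N t x = deriv (\<lambda>v. L t x (U t x) v (px U t x) (px (px U) t x) (N t x)) (pt U t x)"

definition L_ux :: "lagr \<Rightarrow> (real \<Rightarrow> real \<Rightarrow> real) \<Rightarrow> (real \<Rightarrow> real \<Rightarrow> real) \<Rightarrow> real \<Rightarrow> real \<Rightarrow> real" where
  "L_ux L U N t x = deriv (\<lambda>v. L t x (U t x) (pt U t x) v (px (px U) t x) (N t x)) (px U t x)"

definition L_uxx :: "lagr \<Rightarrow> (real \<Rightarrow> real \<Rightarrow> real) \<Rightarrow> (real \<Rightarrow> real \<Rightarrow> real) \<Rightarrow> real \<Rightarrow> real \<Rightarrow> real" where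
  "L_uxx L U N t x = deriv (\<lambda>v. L t x (U t x) (pt U t x) (px U t x) v (N t x)) (px (px U) t x)"

text \<open>Variational derivative delta L / delta u, with total derivatives realised as
partial derivatives along (U, N).\<close>
definition var_deriv :: "lagr \<Rightarrow> (real \<Rightarrow> real \<Rightarrow> real) \<Rightarrow> (real \<Rightarrow> real \<Rightarrow> real) \<Rightarrow> real \<Rightarrow> real \<Rightarrow> real" where
  "var_deriv L U N t x =
     L_u L U N t x - pt (L_ut L U N) t x - px (L_ux L U N) t x + px (px (L_uxx L U N)) t x"

definition adjoint :: "dfun \<Rightarrow> (real \<Rightarrow> real \<Rightarrow> real) \<Rightarrow> (real \<Rightarrow> real \<Rightarrow> real) \<Rightarrow> real \<Rightarrow> real \<Rightarrow> real" where
  "adjoint F U N = var_deriv (formal_lagrangian F) U N"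

text \<open>Strict self-adjointness: F*|_{nu=u} = lambda F with a coefficient lambda
depending on t, x and (any of) the derivatives of u.\<close>
definition strictly_self_adjoint :: "dfun \<Rightarrow> bool" where
  "strictly_self_adjoint F \<longleftrightarrow>
     (\<exists>lam :: real \<Rightarrow> real \<Rightarrow> (nat \<Rightarrow> nat \<Rightarrow> real) \<Rightarrow> real.
        \<forall>U. smooth2 U \<longrightarrow>
          (\<forall>t x. adjoint F U U t x =
                  lam t x (jet U t x) * F t x (U t x) (pt U t x) (px U t x) (px (px U) t x)))"

definition eqF :: "(real \<Rightarrow> real) \<Rightarrow> (real \<Rightarrow> real) \<Rightarrow> (real \<Rightarrow> real) \<Rightarrow> dfun" where
  "eqF f g h = (\<lambda>t x u ut ux uxx. ut - f u * ux - g u * uxx + h u * ux ^ 2)"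

end

theory Submission
  imports Defs
begin

text \<open>Computing the variational derivative of the formal Lagrangian \<open>\<nu> F\<close> and
setting \<open>\<nu> = u\<close> gives \<open>F\<^sup>* = - F - 2 \<phi>(u) u\<^sub>x\<^sub>x - \<phi>'(u) u\<^sub>x\<^sup>2\<close> with
\<open>\<phi>(u) = u h(u) + g(u) + u g'(u)\<close>. So \<open>\<phi> = 0\<close> gives strict self-adjointness with
\<open>\<lambda> = -1\<close>. Conversely, the test function \<open>u = a + g(a) t + x\<^sup>2/2\<close> has \<open>F = 0\<close>,
\<open>u\<^sub>x = 0\<close> and \<open>u\<^sub>x\<^sub>x = 1\<close> at the origin, where therefore \<open>F\<^sup>* = -2 \<phi>(a)\<close> must vanish.
Finally \<open>\<phi>\<close> vanishes off \<open>0\<close> exactly when \<open>h = -g/u - g'\<close>, and then also at \<open>0\<close>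
by continuity.\<close>

lemma isCont_eq_const_off_point:
  fixes \<phi> :: "real \<Rightarrow> real"
  assumes "isCont \<phi> a" and "\<And>u. u \<noteq> a \<Longrightarrow> \<phi> u = c"
  shows "\<phi> a = c"
proof -
  have "(\<phi> \<longlongrightarrow> c) (at a)"
    using assms(2) by (intro tendsto_eventually) (auto simp: eventually_at_filter)
  then show ?thesis
    using assms(1) by (simp add: isCont_def LIM_unique)
qed

lemma smooth_fun_differentiable: "smooth_fun f \<Longrightarrow> f differentiable (at x)"
  unfolding smooth_fun_def by (metis funpow_0)

lemma smooth_fun_deriv: "smooth_fun f \<Longrightarrow> smooth_fun (deriv f)"
  unfolding smooth_fun_def by (metis funpow_Suc_right o_apply)

lemma funpow_deriv_poly: "(deriv ^^ n) (poly p) = poly ((pderiv ^^ n) p)"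
  by (induction n) (auto intro!: DERIV_imp_deriv)

lemma smooth_fun_poly: "smooth_fun (poly p)"
  unfolding smooth_fun_def funpow_deriv_poly by simp

lemma funpow_deriv_add_const:
  assumes "smooth_fun P"
  shows "(deriv ^^ i) (\<lambda>s. P s + c) = (\<lambda>s. (deriv ^^ i) P s + (if i = 0 then c else 0))"
proof (induction i)
  case (Suc i)
  have "((deriv ^^ i) P has_real_derivative deriv ((deriv ^^ i) P) s) (at s)" for s
    using assms unfolding smooth_fun_def by (simp add: DERIV_deriv_iff_real_differentiable)
  then have "deriv (\<lambda>s. (deriv ^^ i) P s + (if i = 0 then c else 0)) = deriv ((deriv ^^ i) P)"
    by (intro ext DERIV_imp_deriv) (auto intro!: derivative_eq_intros)
  then show ?case
    by (simp add: Suc)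
qed simp

lemma funpow_deriv_const: "(deriv ^^ i) (\<lambda>s::real. c) = (\<lambda>s. if i = 0 then c else 0)"
  by (induction i) auto

lemma mixpd_separable:
  assumes "smooth_fun P" and "smooth_fun Q"
  shows "mixpd i j (\<lambda>s y. P s + Q y) t x =
    (if j = 0 then (deriv ^^ i) P t else 0) + (if i = 0 then (deriv ^^ j) Q x else 0)"
proof -
  have "(deriv ^^ j) (\<lambda>y. P s + Q y) x = (if j = 0 then P s else 0) + (deriv ^^ j) Q x" for s
    using funpow_deriv_add_const[OF assms(2), of j "P s"] by (simp add: add.commute)
  then show ?thesis
    by (simp add: mixpd_def funpow_deriv_add_const[OF assms(1)] funpow_deriv_const)
qed

lemma smooth2_separable:
  assumes "smooth_fun P" and "smooth_fun Q"
  shows "smooth2 (\<lambda>s y. P s + Q y)"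
proof -
  have dP: "(deriv ^^ i) P differentiable (at t)"
   and dQ: "(deriv ^^ i) Q differentiable (at t)" for i t
    using assms unfolding smooth_fun_def by blast+
  then have "continuous_on UNIV ((deriv ^^ i) P)" and "continuous_on UNIV ((deriv ^^ i) Q)" for i
    by (meson differentiable_at_imp_differentiable_on differentiable_imp_continuous_on)+
  then have cP: "continuous_on UNIV (\<lambda>p. (deriv ^^ i) P (fst p))"
        and cQ: "continuous_on UNIV (\<lambda>p. (deriv ^^ i) Q (snd p))" for i
    by (auto intro: continuous_on_compose2[OF _ continuous_on_fst[OF continuous_on_id]]
        continuous_on_compose2[OF _ continuous_on_snd[OF continuous_on_id]])
  let ?U = "\<lambda>s y. P s + Q y"
  have "continuous_on UNIV (\<lambda>p. mixpd i j ?U (fst p) (snd p))" for i j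
    unfolding mixpd_separable[OF assms]
    by (cases "i = 0"; cases "j = 0")
      (auto intro!: continuous_on_add cP cQ cP[of 0, simplified] cQ[of 0, simplified])
  moreover have "(\<lambda>s. mixpd i j ?U s x) differentiable (at t)" for i j t x
    unfolding mixpd_separable[OF assms]
    by (cases "i = 0"; cases "j = 0") (auto intro!: differentiable_add dP dP[of 0, simplified])
  moreover have "(\<lambda>y. mixpd i j ?U t y) differentiable (at x)" for i j t x
    unfolding mixpd_separable[OF assms]
    by (cases "i = 0"; cases "j = 0") (auto intro!: differentiable_add dQ dQ[of 0, simplified])
  moreover have "(\<lambda>y. (deriv ^^ j) (\<lambda>y. ?U t y) y) = (\<lambda>y. mixpd 0 j ?U t y)" for j t
    by (simp add: mixpd_def)
  ultimately show ?thesis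
    unfolding smooth2_def by simp
qed

lemma pt_eq_mixpd: "pt U t x = mixpd 1 0 U t x"
  by (simp add: pt_def mixpd_def)

lemma px_eq_mixpd: "px U t x = mixpd 0 1 U t x"
  by (simp add: px_def mixpd_def)

lemma px_px_eq_mixpd: "px (px U) t x = mixpd 0 2 U t x"
  by (simp add: px_def mixpd_def numeral_2_eq_2)

lemma smooth2_differentiable_x:
  assumes "smooth2 U"
  shows "(\<lambda>y. U t y) differentiable (at x)" and "(\<lambda>y. px U t y) differentiable (at x)"
proof -
  have "(\<lambda>y. mixpd 0 j U t y) differentiable (at x)" for j
    using assms unfolding smooth2_def by blast
  from this[of 0] this[of 1] show "(\<lambda>y. U t y) differentiable (at x)"
    and "(\<lambda>y. px U t y) differentiable (at x)"
    by (simp_all add: px_eq_mixpd) (simp add: mixpd_def)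
qed

definition adjoint_defect :: "(real \<Rightarrow> real) \<Rightarrow> (real \<Rightarrow> real) \<Rightarrow> real \<Rightarrow> real" where
  "adjoint_defect g h u = u * h u + g u + u * deriv g u"

lemma adjoint_defect_has_real_derivative:
  assumes "g differentiable (at u)" and "h differentiable (at u)" and "deriv g differentiable (at u)"
  shows "(adjoint_defect g h has_real_derivative
           h u + u * deriv h u + 2 * deriv g u + u * deriv (deriv g) u) (at u)"
  using assms unfolding adjoint_defect_def DERIV_deriv_iff_real_differentiable[symmetric]
  by (auto intro!: derivative_eq_intros)

lemma adjoint_eqF_diagonal:
  fixes f g h :: "real \<Rightarrow> real" and U :: "real \<Rightarrow> real \<Rightarrow> real"
  assumes "\<And>y. f differentiable (at y)" and "\<And>y. g differentiable (at y)"
    and "\<And>y. h differentiable (at y)" and "\<And>y. deriv g differentiable (at y)"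
    and "\<And>y. (\<lambda>y. U t y) differentiable (at y)" and "\<And>y. (\<lambda>y. px U t y) differentiable (at y)"
  shows "adjoint (eqF f g h) U U t x =
     - eqF f g h t x (U t x) (pt U t x) (px U t x) (px (px U) t x)
     - 2 * adjoint_defect g h (U t x) * px (px U) t x
     - deriv (adjoint_defect g h) (U t x) * (px U t x)\<^sup>2"
proof -
  note DERIV_deriv_iff_real_differentiable[symmetric, simp]
  have Df: "(f has_real_derivative deriv f y) (at y)"
   and Dg: "(g has_real_derivative deriv g y) (at y)"
   and Dh: "(h has_real_derivative deriv h y) (at y)"
   and Dg': "(deriv g has_real_derivative deriv (deriv g) y) (at y)"
   and DU: "((\<lambda>y. U t y) has_real_derivative px U t y) (at y)"
   and DUx: "((\<lambda>y. px U t y) has_real_derivative px (px U) t y) (at y)" for y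
    using assms by (simp_all add: px_def[of U] px_def[of "px U"])
  let ?L = "formal_lagrangian (eqF f g h)"
  have Lu: "L_u ?L U U s y = U s y * (- deriv f (U s y) * px U s y
      - deriv g (U s y) * px (px U) s y + deriv h (U s y) * (px U s y)\<^sup>2)" for s y
    unfolding L_u_def formal_lagrangian_def eqF_def
    by (rule DERIV_imp_deriv) (auto intro!: derivative_eq_intros Df Dg Dh)
  have Lut: "L_ut ?L U U = U"
    unfolding L_ut_def formal_lagrangian_def eqF_def
    by (intro ext DERIV_imp_deriv) (auto intro!: derivative_eq_intros)
  have Lux: "L_ux ?L U U s y = U s y * (- f (U s y) + 2 * h (U s y) * px U s y)" for s y
    unfolding L_ux_def formal_lagrangian_def eqF_def
    by (rule DERIV_imp_deriv) (auto intro!: derivative_eq_intros simp: algebra_simps)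
  have Luxx: "L_uxx ?L U U s y = - U s y * g (U s y)" for s y
    unfolding L_uxx_def formal_lagrangian_def eqF_def
    by (rule DERIV_imp_deriv) (auto intro!: derivative_eq_intros)
  have Dx_Lux: "px (L_ux ?L U U) t x = px U t x * (- f (U t x) + 2 * h (U t x) * px U t x)
     + U t x * (- deriv f (U t x) * px U t x + 2 * (deriv h (U t x) * px U t x * px U t x
        + h (U t x) * px (px U) t x))"
    unfolding px_def[of "L_ux ?L U U"] Lux
    by (rule DERIV_imp_deriv)
      (auto intro!: derivative_eq_intros DU DUx DERIV_chain2[OF Df DU] DERIV_chain2[OF Dh DU])
  have Dx_Luxx: "px (L_uxx ?L U U) t y =
      - (px U t y * g (U t y) + U t y * (deriv g (U t y) * px U t y))" for y
    unfolding px_def[of "L_uxx ?L U U"] Luxx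
    by (rule DERIV_imp_deriv) (auto intro!: derivative_eq_intros DU DERIV_chain2[OF Dg DU])
  have Dxx_Luxx: "px (px (L_uxx ?L U U)) t x = - (px (px U) t x * g (U t x)
      + px U t x * (deriv g (U t x) * px U t x) + (px U t x * (deriv g (U t x) * px U t x)
      + U t x * (deriv (deriv g) (U t x) * px U t x * px U t x + deriv g (U t x) * px (px U) t x)))"
    unfolding px_def[of "px (L_uxx ?L U U)"] Dx_Luxx
    by (rule DERIV_imp_deriv)
      (auto intro!: derivative_eq_intros DU DUx DERIV_chain2[OF Dg DU] DERIV_chain2[OF Dg' DU])
  have "deriv (adjoint_defect g h) (U t x) = h (U t x) + U t x * deriv h (U t x)
      + 2 * deriv g (U t x) + U t x * deriv (deriv g) (U t x)"
    using assms by (intro DERIV_imp_deriv adjoint_defect_has_real_derivative)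
  then show ?thesis
    unfolding adjoint_def var_deriv_def Lu Lut Dx_Lux Dxx_Luxx
    by (simp add: adjoint_defect_def eqF_def algebra_simps power2_eq_square)
qed

definition parabolic_test_fun :: "real \<Rightarrow> real \<Rightarrow> real \<Rightarrow> real \<Rightarrow> real" where
  "parabolic_test_fun a k = (\<lambda>t x. poly [:0, k:] t + poly [:a, 0, 1/2:] x)"

lemma smooth2_parabolic_test_fun: "smooth2 (parabolic_test_fun a k)"
  unfolding parabolic_test_fun_def by (intro smooth2_separable smooth_fun_poly)

lemma parabolic_test_fun_at_origin:
  fixes a k :: real
  defines "U \<equiv> parabolic_test_fun a k"
  shows "U 0 0 = a" and "pt U 0 0 = k" and "px U 0 0 = 0" and "px (px U) 0 0 = 1"
proof -
  have m: "mixpd i j U 0 0 = (if j = 0 then poly ((pderiv ^^ i) [:0, k:]) 0 else 0)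
      + (if i = 0 then poly ((pderiv ^^ j) [:a, 0, 1/2:]) 0 else 0)" for i j
    unfolding U_def parabolic_test_fun_def
    by (simp only: mixpd_separable smooth_fun_poly funpow_deriv_poly)
  show "U 0 0 = a"
    by (simp add: U_def parabolic_test_fun_def)
  show "pt U 0 0 = k" and "px U 0 0 = 0"
    unfolding pt_eq_mixpd px_eq_mixpd m by (simp_all add: pderiv_pCons)
  show "px (px U) 0 0 = 1"
    unfolding px_px_eq_mixpd m by (simp add: pderiv_pCons numeral_2_eq_2)
qed

lemma strictly_self_adjoint_eqF_iff:
  fixes f g h :: "real \<Rightarrow> real"
  assumes df: "\<And>y. f differentiable (at y)" and dg: "\<And>y. g differentiable (at y)"
    and dh: "\<And>y. h differentiable (at y)" and ddg: "\<And>y. deriv g differentiable (at y)"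
  shows "strictly_self_adjoint (eqF f g h) \<longleftrightarrow> adjoint_defect g h = (\<lambda>_. 0)"
proof
  assume "strictly_self_adjoint (eqF f g h)"
  then obtain lam where lam: "\<And>U t x. smooth2 U \<Longrightarrow> adjoint (eqF f g h) U U t x =
      lam t x (jet U t x) * eqF f g h t x (U t x) (pt U t x) (px U t x) (px (px U) t x)"
    unfolding strictly_self_adjoint_def by blast
  show "adjoint_defect g h = (\<lambda>_. 0)"
  proof
    fix a
    let ?U = "parabolic_test_fun a (g a)"
    have U: "smooth2 ?U"
      by (rule smooth2_parabolic_test_fun)
    note at_origin = parabolic_test_fun_at_origin[of a "g a"]
    have "adjoint (eqF f g h) ?U ?U 0 0 = - 2 * adjoint_defect g h a"
      using adjoint_eqF_diagonal[where t = 0 and x = 0,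
          OF df dg dh ddg smooth2_differentiable_x[OF U]]
      by (simp add: at_origin eqF_def)
    moreover have "eqF f g h 0 0 (?U 0 0) (pt ?U 0 0) (px ?U 0 0) (px (px ?U) 0 0) = 0"
      by (simp add: at_origin eqF_def)
    ultimately show "adjoint_defect g h a = 0"
      using lam[OF U, of 0 0] by simp
  qed
next
  assume "adjoint_defect g h = (\<lambda>_. 0)"
  then have "adjoint (eqF f g h) U U t x =
      - eqF f g h t x (U t x) (pt U t x) (px U t x) (px (px U) t x)" if "smooth2 U" for U t x
    using adjoint_eqF_diagonal[OF df dg dh ddg smooth2_differentiable_x[OF that]] by simp
  then show "strictly_self_adjoint (eqF f g h)"
    unfolding strictly_self_adjoint_def by (intro exI[of _ "\<lambda>_ _ _. -1"]) simp
qed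

lemma adjoint_defect_eq_0_iff:
  fixes u :: real
  assumes "u \<noteq> 0"
  shows "adjoint_defect g h u = 0 \<longleftrightarrow> h u = - g u / u - deriv g u"
  using assms unfolding adjoint_defect_def by (simp add: field_simps) linarith

theorem corollary2:
  fixes f g h :: "real \<Rightarrow> real"
  assumes "smooth_fun f" and "smooth_fun g" and "smooth_fun h"
    and "f \<noteq> (\<lambda>_. 0)" and "g \<noteq> (\<lambda>_. 0)" and "deriv g \<noteq> (\<lambda>_. 0)"
  shows "strictly_self_adjoint (eqF f g h) \<longleftrightarrow>
         (\<forall>u. u \<noteq> 0 \<longrightarrow> h u = - g u / u - deriv g u)"
proof -
  have df: "\<And>y. f differentiable (at y)" and dg: "\<And>y. g differentiable (at y)"
    and dh: "\<And>y. h differentiable (at y)" and ddg: "\<And>y. deriv g differentiable (at y)"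
    using assms(1-3) smooth_fun_deriv[OF assms(2)] by (simp_all add: smooth_fun_differentiable)
  have "isCont (adjoint_defect g h) 0"
    using adjoint_defect_has_real_derivative[OF dg dh ddg] by (rule DERIV_isCont)
  then have "adjoint_defect g h = (\<lambda>_. 0) \<longleftrightarrow> (\<forall>u. u \<noteq> 0 \<longrightarrow> adjoint_defect g h u = 0)"
    by (metis isCont_eq_const_off_point)
  then show ?thesis
    using strictly_self_adjoint_eqF_iff[OF df dg dh ddg] adjoint_defect_eq_0_iff by simp
qed

end
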